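(* Let $\lambda\in(\frac16,\frac56)$. For every $x_0\in[0,1]$, $h_{F^\lambda}(x_0)\le1$, and $h_{F^\lambda}(x_0)=1$ if $x_0\in\widetilde{\mathcal E}$.
   Context: Construction: $F^\lambda_0\equiv0$ on $[0,1]$. Given $F^\lambda_n$ with its $4^n$ closed intervals of generation $n$ (covering $[0,1]$, disjoint interiors, $F^\lambda_n$ affine on each), on each interval $[a,b]$ of generation $n$, with $\ell=b-a$ and slope $m$, $F^\lambda_{n+1}$ coincides with $F^\lambda_n$ at $a,a+\ell/3,a+2\ell/3,b$, equals $F^\lambda_n(a+\ell/2)+\lambda\ell\sqrt{1+m^2}$ at $a+\ell/2$, and is affine on $[a,a+\ell/3],[a+\ell/3,a+\ell/2],[a+\ell/2,a+2\ell/3],[a+2\ell/3,b]$. $F^\lambda=\lim_nF^\lambda_n$. Pointwise exponent: for bounded $f$, $f\in\mathcal C^\alpha(x_0)$ if there exist a polynomial $P$ of degree at most $\lfloor\alpha\rfloor$ and $C,\delta>0$ with $|f(x)-P(x-x_0)|\le C|x-x_0|^\alpha$ whenever $|x-x_0|<\delta$; $h_f(x_0)=\sup\{\alpha\ge0:f\in\mathcal C^\alpha(x_0)\}$. Dynamics: $T(x)=3x$ on $[0,\frac13)$, $6x-2$ on $[\frac13,\frac12)$, $4-6x$ on $[\frac12,\frac23)$, $3x-2$ on $[\frac23,1]$; $U(x)=0,1,2,3$ on these intervals; $u_n(x)=U(T^nx)$; $\beta_{1,2}(x,n)=\#\{k<n:u_k(x)\in\{1,2\}\}$. $\widetilde{\mathcal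 E}$ is the set of $x$ for which $(\beta_{1,2}(x,n))_n$ is eventually constant. *)

theory Defs
  imports "HOL-Analysis.Analysis" "HOL-Computational_Algebra.Polynomial"
begin

text \<open>A generation-n piecewise affine function F_n is represented by the sorted list of
  its nodes (endpoints of the generation-n intervals) together with its values there.\<close>

fun refine :: "real \<Rightarrow> (real \<times> real) list \<Rightarrow> (real \<times> real) list" where
  "refine lam ((a, fa) # (b, fb) # rest) =
     (let l = b - a; m = (fb - fa) / l in
      (a, fa)
      # (a + l/3, fa + m * (l/3))
      # (a + l/2, fa + m * (l/2) + lam * l * sqrt (1 + m^2))
      # (a + 2*l/3, fa + m * (2*l/3))
      # refine lam ((b, fb) # rest))"
| "refine lam [p] = [p]"
| "refine lam [] = []"

definition nodes :: "real \<Rightarrow> nat \<Rightarrow> (real \<times> real) list" where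
  "nodes lam n = (refine lam ^^ n) [(0, 0), (1, 0)]"

fun interp :: "(real \<times> real) list \<Rightarrow> real \<Rightarrow> real" where
  "interp ((a, fa) # (b, fb) # rest) x =
     (if x \<le> b then fa + (fb - fa) / (b - a) * (x - a) else interp ((b, fb) # rest) x)"
| "interp [p] x = snd p"
| "interp [] x = 0"

definition Fn :: "real \<Rightarrow> nat \<Rightarrow> real \<Rightarrow> real" where
  "Fn lam n x = interp (nodes lam n) x"

definition F :: "real \<Rightarrow> real \<Rightarrow> real" where
  "F lam x = lim (\<lambda>n. Fn lam n x)"

definition pointwise_holder :: "(real \<Rightarrow> real) \<Rightarrow> real \<Rightarrow> real \<Rightarrow> bool" where
  "pointwise_holder f alpha x0 \<longleftrightarrow>
     (\<exists>P :: real poly. \<exists>C \<delta>. degree P \<le> nat \<lfloor>alpha\<rfloor> \<and> C > 0 \<and> \<delta> > 0 \<and>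
        (\<forall>x \<in> {0..1}. \<bar>x - x0\<bar> < \<delta> \<longrightarrow> \<bar>f x - poly P (x - x0)\<bar> \<le> C * \<bar>x - x0\<bar> powr alpha))"

definition holder_exponent :: "(real \<Rightarrow> real) \<Rightarrow> real \<Rightarrow> ereal" where
  "holder_exponent f x0 = Sup (ereal ` {alpha. alpha \<ge> 0 \<and> pointwise_holder f alpha x0})"

definition T :: "real \<Rightarrow> real" where
  "T x = (if x < 1/3 then 3*x else if x < 1/2 then 6*x - 2
          else if x < 2/3 then 4 - 6*x else 3*x - 2)"

definition U :: "real \<Rightarrow> nat" where
  "U x = (if x < 1/3 then 0 else if x < 1/2 then 1 else if x < 2/3 then 2 else 3)"

definition u :: "nat \<Rightarrow> real \<Rightarrow> nat" where
  "u n x = U ((T ^^ n) x)"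

definition beta12 :: "real \<Rightarrow> nat \<Rightarrow> nat" where
  "beta12 x n = card {k. k < n \<and> u k x \<in> {1, 2}}"

definition E_tilde :: "real set" where
  "E_tilde = {x. \<exists>N. \<forall>n \<ge> N. beta12 x n = beta12 x N}"

end

theory Submission
  imports Defs "HOL-Computational_Algebra.Fundamental_Theorem_Algebra"
begin

text \<open>Refining a piece \<open>s\<close> of \<open>F\<^sub>n\<close> raises its midpoint by \<open>lam\<close> times the arc length
  of \<open>s\<close>. Each of the four children of \<open>s\<close> has at most \<open>1/6 + lam < 1\<close> times the arc length of
  \<open>s\<close>, so \<open>F\<^sub>n\<close> converges geometrically, and on every piece the limit stays within
  \<open>lam / (5/6 - lam)\<close> arc lengths of the chord.

  Exponent at most 1: the pieces containing \<open>x\<^sub>0\<close> have width at most \<open>3\<^sup>-\<^sup>n\<close> and a midpoint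
  bump of at least \<open>lam\<close> times their width, whereas a pointwise exponent \<open>\<alpha> > 1\<close> would make
  these second differences \<open>o(width)\<close>.

  Exponent 1 on \<open>E_tilde\<close>: the outer children keep the slope and shrink by \<open>1/3\<close>, so \<open>F\<close> is
  Lipschitz at the endpoints of a piece, with a constant proportional to \<open>sqrt (1 + slope\<^sup>2)\<close>.
  Following the coding of \<open>x\<^sub>0\<close> by \<open>T\<close>, the pieces containing \<open>x\<^sub>0\<close> are eventually outer
  children, so their slopes take finitely many values. Going from \<open>x\<close> to \<open>x\<^sub>0\<close> through the facing
  endpoints of the two children of the smallest piece containing both gives a uniform Lipschitz
  bound at \<open>x\<^sub>0\<close>.\<close>

lemma refine_hd_last:
  "xs \<noteq> [] \<Longrightarrow> refine lam xs \<noteq> [] \<and> hd (refine lam xs) = hd xs \<and> last (refine lam xs) = last xs"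
  by (induction lam xs rule: refine.induct) (auto simp: Let_def)

lemma length_refine_ge: "length xs \<le> length (refine lam xs)"
  by (induction lam xs rule: refine.induct) (fastforce simp: Let_def)+

lemma refine_append_Cons:
  "refine lam (xs @ q # ys) = refine lam (xs @ [q]) @ tl (refine lam (q # ys))"
proof (induction xs rule: induct_list012)
  case 1
  then show ?case using refine_hd_last[of "q # ys" lam] by (cases "refine lam (q # ys)") auto
next
  case (2 p)
  have "refine lam (q # ys) = q # tl (refine lam (q # ys))"
    using refine_hd_last[of "q # ys" lam] by (cases "refine lam (q # ys)") auto
  then show ?case by (cases p; cases q) (auto simp: Let_def)
next
  case (3 p p' zs)
  then show ?case by (cases p; cases p') (auto simp: Let_def)
qed

lemma funpow_refine_hd_last:
  "xs \<noteq> [] \<Longrightarrow> (refine lam ^^ n) xs \<noteq> [] \<and> hd ((refine lam ^^ n) xs) = hd xs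
     \<and> last ((refine lam ^^ n) xs) = last xs"
  by (induction n) (auto dest: refine_hd_last)

lemma length_funpow_refine_ge: "length xs \<le> length ((refine lam ^^ n) xs)"
  by (induction n) (auto intro: order_trans[OF _ length_refine_ge])

lemma funpow_refine_append_Cons:
  "(refine lam ^^ n) (xs @ q # ys) = (refine lam ^^ n) (xs @ [q]) @ tl ((refine lam ^^ n) (q # ys))"
proof (induction n)
  case (Suc n)
  define A where "A = (refine lam ^^ n) (xs @ [q])"
  define B where "B = (refine lam ^^ n) (q # ys)"
  have A: "A = butlast A @ [q]" and B: "B = q # tl B"
    using funpow_refine_hd_last[where xs="xs @ [q]" and lam=lam and n=n]
      funpow_refine_hd_last[where xs="q # ys" and lam=lam and n=n]
    unfolding A_def B_def by (metis append_butlast_last_id last_snoc snoc_eq_iff_butlast,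
        metis list.collapse list.sel(1) list.simps(3))
  have "(refine lam ^^ Suc n) (xs @ q # ys) = refine lam (butlast A @ q # tl B)"
    using Suc A B unfolding A_def B_def by (metis append.assoc append_Cons append_Nil
      funpow.simps(2) o_apply)
  also have "\<dots> = refine lam A @ tl (refine lam B)"
    by (subst refine_append_Cons) (metis A B)
  finally show ?case by (simp add: A_def B_def)
qed simp

lemma interp_append_tl:
  assumes "2 \<le> length A" "\<forall>p\<in>set A. fst p \<le> fst (last A)" "B \<noteq> []" "hd B = last A"
  shows "interp (A @ tl B) x = (if x \<le> fst (last A) then interp A x else interp B x)"
  using assms
proof (induction A rule: induct_list012)
  case (3 a1 a2 zs)
  show ?case
  proof (cases zs)
    case Nil
    then show ?thesis using 3(3-) by (cases B; cases a1; cases a2) auto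
  next
    case (Cons a3 r)
    then have "fst a2 \<le> fst (last (a1 # a2 # zs))" using 3(4) by auto
    then show ?thesis using 3 Cons by (cases a1; cases a2) auto
  qed
qed auto

lemma abs_le_sqrt_one_plus_sq: "\<bar>m\<bar> \<le> sqrt (1 + m\<^sup>2)"
  by (metis real_sqrt_abs real_sqrt_le_mono le_add_same_cancel2 zero_le_one)

lemma sqrt_one_plus_sq_shift_le:
  fixes m c :: real
  shows "sqrt (1 + (m + c * sqrt (1 + m\<^sup>2))\<^sup>2) \<le> (1 + \<bar>c\<bar>) * sqrt (1 + m\<^sup>2)"
proof -
  define r where "r = sqrt (1 + m\<^sup>2)"
  have r: "0 \<le> r" "r\<^sup>2 = 1 + m\<^sup>2" "\<bar>m\<bar> \<le> r"
    using abs_le_sqrt_one_plus_sq[of m] by (simp_all add: r_def)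
  have "c * m \<le> \<bar>c\<bar> * r"
    using r(3) abs_ge_self[of "c * m"] mult_left_mono[OF r(3), of "\<bar>c\<bar>"] by (simp add: abs_mult)
  then have "c * m * r \<le> \<bar>c\<bar> * r * r"
    using r(1) by (rule mult_right_mono)
  then have "1 + (m + c * r)\<^sup>2 \<le> ((1 + \<bar>c\<bar>) * r)\<^sup>2"
    using r(2) by (simp add: power2_eq_square algebra_simps)
  then have "sqrt (1 + (m + c * r)\<^sup>2) \<le> \<bar>(1 + \<bar>c\<bar>) * r\<bar>"
    using real_sqrt_le_mono by fastforce
  then show ?thesis using r by (simp add: r_def)
qed

lemma geometric_increments:
  fixes f :: "nat \<Rightarrow> real"
  assumes steps: "\<And>n. \<bar>f (Suc n) - f n\<bar> \<le> c * q ^ n" and q: "0 \<le> q" "q < 1"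
  shows "f \<longlonglongrightarrow> lim f" and "\<bar>lim f - f 0\<bar> \<le> c / (1 - q)"
proof -
  define d where "d n = f (Suc n) - f n" for n
  have geom: "summable (\<lambda>n. c * q ^ n)" using q by (simp add: summable_geometric)
  have abs_summable: "summable (\<lambda>n. \<bar>d n\<bar>)"
    by (rule summable_comparison_test'[OF geom]) (simp add: d_def steps)
  have "f = (\<lambda>n. f 0 + (\<Sum>i<n. d i))"
    by (simp add: d_def sum_lessThan_telescope)
  moreover have "(\<lambda>n. f 0 + (\<Sum>i<n. d i)) \<longlonglongrightarrow> f 0 + suminf d"
    using summable_rabs_cancel[OF abs_summable] by (intro tendsto_add tendsto_const summable_LIMSEQ)
  ultimately have lim: "f \<longlonglongrightarrow> f 0 + suminf d" by simp
  then show "f \<longlonglongrightarrow> lim f" by (simp add: limI)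
  have "\<bar>suminf d\<bar> \<le> (\<Sum>n. \<bar>d n\<bar>)" by (rule summable_rabs[OF abs_summable])
  also have "\<dots> \<le> (\<Sum>n. c * q ^ n)"
    by (rule suminf_le[OF _ abs_summable geom]) (simp add: d_def steps)
  also have "\<dots> = c / (1 - q)" using q by (simp add: suminf_mult suminf_geometric)
  finally show "\<bar>lim f - f 0\<bar> \<le> c / (1 - q)" using lim by (simp add: limI)
qed

lemma exists_power_scale:
  fixes d L c :: real
  assumes "0 < d" "d \<le> L" "1 < c"
  obtains j :: nat where "L / c ^ Suc j < d" "d \<le> L / c ^ j"
proof -
  obtain n where "L / d < c ^ n" using real_arch_pow[OF assms(3)] by blast
  then have "L / c ^ n < d" using assms by (simp add: field_simps)
  then obtain j where "\<not> L / c ^ j < d" "L / c ^ Suc j < d"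
    using ex_least_nat_less[of "\<lambda>j. L / c ^ j < d" n] assms by auto
  then show ?thesis using that by simp
qed

lemma abs_second_difference_le:
  fixes u v w e :: real
  shows "\<bar>u\<bar> \<le> e \<Longrightarrow> \<bar>v\<bar> \<le> e \<Longrightarrow> \<bar>w\<bar> \<le> e \<Longrightarrow> \<bar>u - (v + w) / 2\<bar> \<le> 2 * e"
  by (auto simp: abs_le_iff field_simps)

lemma superlinear_lt_linear_near_0:
  fixes \<alpha> K c :: real
  assumes "1 < \<alpha>" "0 < c"
  shows "\<exists>\<eta>>0. \<forall>h. 0 < h \<longrightarrow> h < \<eta> \<longrightarrow> K * (h powr \<alpha> + h\<^sup>2) < c * h"
proof -
  have "((\<lambda>h. K * (h powr (\<alpha> - 1) + h)) \<longlongrightarrow> K * (0 + 0)) (at_right 0)"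
    using assms(1)
    by (intro tendsto_intros tendsto_zero_powrI) (auto simp: eventually_at_right_field intro:
      exI[of _ 1])
  then have "\<forall>\<^sub>F h in at_right 0. K * (h powr (\<alpha> - 1) + h) < c"
    using assms(2) by (intro order_tendstoD(2)) auto
  then obtain \<eta> where \<eta>: "0 < \<eta>" "\<And>h. 0 < h \<Longrightarrow> h < \<eta> \<Longrightarrow> K * (h powr (\<alpha> - 1) + h) < c"
    by (auto simp: eventually_at_right_field)
  have "K * (h powr \<alpha> + h\<^sup>2) < c * h" if "0 < h" "h < \<eta>" for h
  proof -
    have "K * (h powr \<alpha> + h\<^sup>2) = h * (K * (h powr (\<alpha> - 1) + h))"
      using that(1) by (simp add: powr_diff power2_eq_square algebra_simps)
    also have "\<dots> < h * c" using \<eta>(2)[OF that] that(1) by simp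
    finally show ?thesis by (simp add: mult.commute)
  qed
  with \<eta>(1) show ?thesis by blast
qed

section \<open>Pointwise Hoelder exponents\<close>

lemma holder_exponent_ge:
  "0 \<le> \<alpha> \<Longrightarrow> pointwise_holder f \<alpha> x0 \<Longrightarrow> ereal \<alpha> \<le> holder_exponent f x0"
  unfolding holder_exponent_def by (rule Sup_upper) auto

lemma holder_exponent_le:
  assumes "\<And>\<alpha>. \<beta> < \<alpha> \<Longrightarrow> \<not> pointwise_holder f \<alpha> x0"
  shows "holder_exponent f x0 \<le> ereal \<beta>"
  unfolding holder_exponent_def using assms by (intro Sup_least) (auto simp: not_less[symmetric])

lemma pointwise_holder_1_if_lipschitz_at:
  assumes "\<forall>x\<in>{0..1}. \<bar>f x - f x0\<bar> \<le> C * \<bar>x - x0\<bar>"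
  shows "pointwise_holder f 1 x0"
  unfolding pointwise_holder_def
proof (intro exI conjI)
  show "degree [:f x0:] \<le> nat \<lfloor>1::real\<rfloor>" by simp
  show "(0::real) < \<bar>C\<bar> + 1" "(0::real) < 1" by simp_all
  show "\<forall>x\<in>{0..1}. \<bar>x - x0\<bar> < 1 \<longrightarrow> \<bar>f x - poly [:f x0:] (x - x0)\<bar> \<le> (\<bar>C\<bar> + 1) * \<bar>x - x0\<bar> powr 1"
    using assms order_trans[OF bspec[OF assms] mult_right_mono[of C "\<bar>C\<bar> + 1"]] by simp
qed

lemma poly_eq_linear_plus_sq:
  fixes P :: "real poly"
  shows "\<exists>p0 p1 Q. \<forall>t. poly P t = p0 + p1 * t + t\<^sup>2 * poly Q t"
proof -
  obtain p0 p1 Q where "P = pCons p0 (pCons p1 Q)" by (metis pCons_cases)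
  then have "\<forall>t. poly P t = p0 + p1 * t + t\<^sup>2 * poly Q t"
    by (simp add: power2_eq_square algebra_simps)
  then show ?thesis by blast
qed

lemma pointwise_holder_second_difference:
  assumes "pointwise_holder f \<alpha> x0" "0 \<le> \<alpha>"
  shows "\<exists>\<delta>>0. \<exists>K. \<forall>a\<in>{0..1}. \<forall>b\<in>{0..1}. a \<le> x0 \<longrightarrow> x0 \<le> b \<longrightarrow> b - a < \<delta> \<longrightarrow>
      \<bar>f ((a + b) / 2) - (f a + f b) / 2\<bar> \<le> K * ((b - a) powr \<alpha> + (b - a)\<^sup>2)"
proof -
  obtain P C \<delta> where C: "0 < C" and \<delta>: "0 < \<delta>"
    and H: "\<And>x. x \<in> {0..1} \<Longrightarrow> \<bar>x - x0\<bar> < \<delta> \<Longrightarrow> \<bar>f x - poly P (x - x0)\<bar> \<le> C * \<bar>x - x0\<bar> powr \<alpha>"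
    using assms(1) unfolding pointwise_holder_def by blast
  obtain p0 p1 Q where P: "\<And>t. poly P t = p0 + p1 * t + t\<^sup>2 * poly Q t"
    using poly_eq_linear_plus_sq[of P] by blast
  obtain M where M: "0 < M" "\<And>t. \<bar>t\<bar> \<le> 1 \<Longrightarrow> \<bar>poly Q t\<bar> \<le> M"
    using poly_bound_exists[of 1 Q] by auto
  show ?thesis
  proof (rule exI[of _ "min \<delta> 1"], intro conjI exI[of _ "2 * C + 2 * M"] ballI impI)
    fix a b assume ab: "a \<in> {0..1}" "b \<in> {0..1}" "a \<le> x0" "x0 \<le> b" "b - a < min \<delta> 1"
    define h where "h = b - a"
    define g where "g z = f z - poly P (z - x0)" for z
    define r where "r z = (z - x0)\<^sup>2 * poly Q (z - x0)" for z
    have near: "\<bar>z - x0\<bar> \<le> h" if "a \<le> z" "z \<le> b" for z using that ab by (auto simp: h_def)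
    have g: "\<bar>g z\<bar> \<le> C * h powr \<alpha>" if "a \<le> z" "z \<le> b" for z
    proof -
      have "\<bar>g z\<bar> \<le> C * \<bar>z - x0\<bar> powr \<alpha>"
        unfolding g_def using H near[OF that] that ab by (auto simp: h_def)
      also have "\<dots> \<le> C * h powr \<alpha>" using near[OF that] C assms(2) by (intro mult_left_mono
        powr_mono2) auto
      finally show ?thesis .
    qed
    have r: "\<bar>r z\<bar> \<le> M * h\<^sup>2" if "a \<le> z" "z \<le> b" for z
    proof -
      have "\<bar>poly Q (z - x0)\<bar> \<le> M" using M(2) near[OF that] ab by (auto simp: h_def)
      moreover have "(z - x0)\<^sup>2 \<le> h\<^sup>2" using near[OF that] by (metis abs_ge_zero power2_abs
        power_mono)
      ultimately show ?thesis by (simp add: r_def abs_mult mult_mono' mult.commute)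
    qed
    have mid: "a \<le> (a + b) / 2" "(a + b) / 2 \<le> b" and le: "a \<le> b" using ab by auto
    have "f ((a + b) / 2) - (f a + f b) / 2
        = (g ((a + b) / 2) - (g a + g b) / 2) + (r ((a + b) / 2) - (r a + r b) / 2)"
      by (simp add: g_def r_def P field_simps)
    then have "\<bar>f ((a + b) / 2) - (f a + f b) / 2\<bar>
        \<le> \<bar>g ((a + b) / 2) - (g a + g b) / 2\<bar> + \<bar>r ((a + b) / 2) - (r a + r b) / 2\<bar>"
      by (simp only: abs_triangle_ineq)
    also have "\<dots> \<le> 2 * (C * h powr \<alpha>) + 2 * (M * h\<^sup>2)"
      using abs_second_difference_le[OF g[OF mid] g[OF order.refl le] g[OF le order.refl]]
        abs_second_difference_le[OF r[OF mid] r[OF order.refl le] r[OF le order.refl]]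
      by (rule add_mono)
    also have "\<dots> \<le> (2 * C + 2 * M) * (h powr \<alpha> + h\<^sup>2)"
      using C M by (simp add: algebra_simps)
    finally show "\<bar>f ((a + b) / 2) - (f a + f b) / 2\<bar> \<le> (2 * C + 2 * M) * ((b - a) powr \<alpha> + (b -
      a)\<^sup>2)"
      by (simp add: h_def)
  qed (use \<delta> in simp)
qed

section \<open>The coding by \<open>T\<close>\<close>

fun orient :: "real \<Rightarrow> nat \<Rightarrow> bool" where
  "orient x 0 = True"
| "orient x (Suc n) = (orient x n \<noteq> (u n x = 2))"

definition digit :: "real \<Rightarrow> nat \<Rightarrow> nat" where
  "digit x n = (if orient x n then u n x else 3 - u n x)"

lemma digit_less_4: "digit x n < 4"
  by (simp add: digit_def u_def U_def)

lemma T_mem_unit: "y \<in> {0..1} \<Longrightarrow> T y \<in> {0..1}"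
  by (simp add: T_def)

lemma beta12_Suc: "beta12 x (Suc n) = beta12 x n + (if u n x \<in> {1, 2} then 1 else 0)"
proof -
  have "{k. k < Suc n \<and> u k x \<in> {1, 2}} =
      (if u n x \<in> {1, 2} then insert n {k. k < n \<and> u k x \<in> {1, 2}} else {k. k < n \<and> u k x \<in> {1,
        2}})"
    by (auto simp: less_Suc_eq)
  then show ?thesis by (simp add: beta12_def)
qed

lemma E_tilde_eventually_outer:
  assumes "x \<in> E_tilde"
  shows "\<exists>N. \<forall>n\<ge>N. u n x \<notin> {1, 2}"
proof -
  obtain N where N: "\<And>n. N \<le> n \<Longrightarrow> beta12 x n = beta12 x N"
    using assms by (auto simp: E_tilde_def)
  have "u n x \<notin> {1, 2}" if "N \<le> n" for n
    using N[OF that] N[of "Suc n"] that beta12_Suc[of x n] by (auto split: if_splits)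
  then show ?thesis by blast
qed

datatype seg = Seg (left_end: real) (left_val: real) (width: real) (slope: real)

definition right_end :: "seg \<Rightarrow> real" where
  "right_end s = left_end s + width s"

definition right_val :: "seg \<Rightarrow> real" where
  "right_val s = left_val s + slope s * width s"

definition ivl :: "seg \<Rightarrow> real set" where
  "ivl s = {left_end s..right_end s}"

definition lin :: "seg \<Rightarrow> real \<Rightarrow> real" where
  "lin s x = left_val s + slope s * (x - left_end s)"

definition stretch :: "seg \<Rightarrow> real" where
  "stretch s = sqrt (1 + (slope s)\<^sup>2)"

definition arclen :: "seg \<Rightarrow> real" where
  "arclen s = width s * stretch s"

definition unit_seg :: seg where
  "unit_seg = Seg 0 0 1 0"

lemma width_unit_seg: "width unit_seg = 1"
  by (simp add: unit_seg_def)

lemma ivl_unit_seg: "ivl unit_seg = {0..1}"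
  by (simp add: ivl_def unit_seg_def right_end_def)

lemma width_nonneg_if_mem_ivl: "x \<in> ivl s \<Longrightarrow> 0 \<le> width s"
  by (simp add: ivl_def right_end_def)

lemma abs_slope_le_stretch: "\<bar>slope s\<bar> \<le> stretch s"
  unfolding stretch_def by (rule abs_le_sqrt_one_plus_sq)

lemma stretch_ge_1: "1 \<le> stretch s"
  by (simp add: stretch_def)

lemma lin_diff: "\<bar>lin s x - lin s y\<bar> \<le> stretch s * \<bar>x - y\<bar>"
proof -
  have "\<bar>lin s x - lin s y\<bar> = \<bar>slope s\<bar> * \<bar>x - y\<bar>"
    by (simp add: lin_def abs_mult[symmetric] algebra_simps)
  then show ?thesis using abs_slope_le_stretch by (simp add: mult_right_mono)
qed

section \<open>Refinement of a piece\<close>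

text \<open>The hypotheses say \<open>1/3 < 1/6 + lam < 1\<close>: every child has at most \<open>1/6 + lam\<close> times the
  arc length of its parent (for the two outer children, whose ratio is \<open>1/3\<close>, this is where
  \<open>1/6 < lam\<close> is needed), and the refinement contracts arc lengths.\<close>

locale admissible_lam =
  fixes lam :: real
  assumes lam_gt: "1/6 < lam" and lam_lt: "lam < 5/6"
begin

text \<open>As in \<open>refine\<close>, the middle node is raised by \<open>lam\<close> times the arc length of \<open>s\<close>; this
  gives the two middle children the slopes \<open>slope s \<plusminus> 6 lam stretch s\<close>.\<close>

definition child :: "seg \<Rightarrow> nat \<Rightarrow> seg" where
  "child s k = (let a = left_end s; v = left_val s; l = width s; m = slope s; g = stretch s in
     if k = 0 then Seg a v (l/3) m
     else if k = 1 then Seg (a + l/3) (v + m*l/3) (l/6) (m + 6*lam*g)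
     else if k = 2 then Seg (a + l/2) (v + m*l/2 + lam*l*g) (l/6) (m - 6*lam*g)
     else Seg (a + 2*l/3) (v + 2*m*l/3) (l/3) m)"

lemma child_simps:
  "child s 0 = Seg (left_end s) (left_val s) (width s / 3) (slope s)"
  "child s (Suc 0) = Seg (left_end s + width s / 3) (left_val s + slope s * width s / 3)
     (width s / 6) (slope s + 6 * lam * stretch s)"
  "child s 2 = Seg (left_end s + width s / 2)
     (left_val s + slope s * width s / 2 + lam * width s * stretch s) (width s / 6)
     (slope s - 6 * lam * stretch s)"
  "child s 3 = Seg (left_end s + 2 * width s / 3) (left_val s + 2 * slope s * width s / 3)
     (width s / 3) (slope s)"
  by (simp_all add: child_def Let_def)

lemma less_4_cases:
  fixes k :: nat
  assumes "k < 4" obtains "k = 0" | "k = 1" | "k = 2" | "k = 3"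
  using assms by linarith

lemma width_child:
  "k < 4 \<Longrightarrow> 0 \<le> width s \<Longrightarrow> width s / 6 \<le> width (child s k) \<and> width (child s k) \<le> width s / 3"
  by (elim less_4_cases) (auto simp: child_simps)

lemma width_child_pos: "k < 4 \<Longrightarrow> 0 < width s \<Longrightarrow> 0 < width (child s k)"
  using width_child[of k s] by auto

lemma stretch_child_le:
  assumes "k < 4"
  shows "stretch (child s k) \<le> (1 + 6 * lam) * stretch s"
proof -
  have "1 * stretch s \<le> (1 + 6 * lam) * stretch s"
    using lam_gt stretch_ge_1[of s] by (intro mult_right_mono) auto
  then have corner: "stretch (Seg a v l (slope s)) \<le> (1 + 6 * lam) * stretch s" for a v l
    by (simp add: stretch_def)
  have shifted: "stretch (Seg a v l (slope s + c * stretch s)) \<le> (1 + 6 * lam) * stretch s"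
    if "\<bar>c\<bar> = 6 * lam" for a v l c
    using sqrt_one_plus_sq_shift_le[of "slope s" c] that by (simp add: stretch_def)
  from assms show ?thesis
  proof (cases rule: less_4_cases)
    case 2
    then show ?thesis using shifted[of "6 * lam"] lam_gt by (simp add: child_simps)
  next
    case 3
    then show ?thesis using shifted[of "- 6 * lam"] lam_gt by (simp add: child_simps)
  qed (simp_all add: child_simps corner)
qed

lemma stretch_child_le_6: "k < 4 \<Longrightarrow> stretch (child s k) \<le> 6 * stretch s"
  using stretch_child_le[of k s] mult_right_mono[of "1 + 6 * lam" 6 "stretch s"] lam_lt
    stretch_ge_1[of s] by linarith

lemma arclen_child_le:
  assumes "k < 4" "0 \<le> width s"
  shows "arclen (child s k) \<le> (1/6 + lam) * arclen s"
proof -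
  have "width (child s k) * stretch (child s k) \<le> width s / 6 * ((1 + 6 * lam) * stretch s)"
  proof (cases "k = 0 \<or> k = 3")
    case True
    then have "width (child s k) * stretch (child s k) = width s / 3 * stretch s"
      by (auto simp: child_simps stretch_def)
    also have "\<dots> = (width s * stretch s) * (1/3)" by simp
    also have "\<dots> \<le> (width s * stretch s) * ((1 + 6 * lam) / 6)"
      using lam_gt assms(2) stretch_ge_1[of s] by (intro mult_left_mono) auto
    finally show ?thesis by (simp add: field_simps)
  next
    case False
    with assms(1) have wc: "width (child s k) = width s / 6"
      by (elim less_4_cases) (auto simp: child_simps)
    show ?thesis
      unfolding wc using stretch_child_le[OF assms(1)] assms(2) by (intro mult_left_mono) auto
  qed
  then show ?thesis by (simp add: arclen_def field_simps)
qed

lemma child_0_left: "left_end (child s 0) = left_end s" "left_val (child s 0) = left_val s"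
  by (simp_all add: child_simps)

lemma child_3_right: "right_end (child s 3) = right_end s" "right_val (child s 3) = right_val s"
  by (simp_all add: child_simps right_end_def right_val_def algebra_simps)

lemma child_adjacent:
  "right_end (child s 0) = left_end (child s 1)" "right_val (child s 0) = left_val (child s 1)"
  "right_end (child s 1) = left_end (child s 2)" "right_val (child s 1) = left_val (child s 2)"
  "right_end (child s 2) = left_end (child s 3)" "right_val (child s 2) = left_val (child s 3)"
  by (simp_all add: child_simps right_end_def right_val_def field_simps)

lemma children_gap:
  assumes "0 \<le> width s" "j < k" "k < 4"
  shows "right_end (child s j) \<le> left_end (child s k)"
    and "right_end (child s j) = left_end (child s k)
      \<or> right_end (child s j) + width s / 6 \<le> left_end (child s k)"
proof -
  have "j \<in> {0, 1, 2, 3}" "k \<in> {0, 1, 2, 3}" using assms(2,3) by auto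
  then show "right_end (child s j) \<le> left_end (child s k)"
    and "right_end (child s j) = left_end (child s k)
      \<or> right_end (child s j) + width s / 6 \<le> left_end (child s k)"
    using assms(1,2) by (auto simp: child_simps right_end_def)
qed

lemma children_meet:
  assumes "0 < width s" "j < k" "k < 4" "right_end (child s j) = left_end (child s k)"
  shows "right_val (child s j) = left_val (child s k)"
proof -
  have "j \<in> {0, 1, 2, 3}" "k \<in> {0, 1, 2, 3}" using assms(2,3) by auto
  then show ?thesis
    using assms(1,2,4) by (auto simp: child_simps right_end_def right_val_def field_simps)
qed

lemma ivl_child_subset: "k < 4 \<Longrightarrow> 0 \<le> width s \<Longrightarrow> ivl (child s k) \<subseteq> ivl s"
  by (elim less_4_cases) (auto simp: ivl_def child_simps right_end_def)

definition child_index :: "seg \<Rightarrow> real \<Rightarrow> nat" where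
  "child_index s x = (if x \<le> right_end (child s 0) then 0 else if x \<le> right_end (child s 1) then 1
     else if x \<le> right_end (child s 2) then 2 else 3)"

lemma child_index_less_4: "child_index s x < 4"
  by (simp add: child_index_def)

lemma mem_ivl_child_index: "x \<in> ivl s \<Longrightarrow> x \<in> ivl (child s (child_index s x))"
  using child_adjacent(1,3,5)[of s]
  by (auto simp: child_index_def ivl_def child_0_left child_3_right)

lemma lin_child_deviation:
  assumes "k < 4" "x \<in> ivl (child s k)"
  shows "\<bar>lin (child s k) x - lin s x\<bar> \<le> lam * arclen s"
proof -
  have lg: "0 \<le> lam * stretch s" using lam_gt stretch_ge_1[of s] by simp
  have "0 \<le> width (child s k)" using width_nonneg_if_mem_ivl[OF assms(2)] .
  with assms(1) have "0 \<le> width s" by (elim less_4_cases) (auto simp: child_simps)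
  with lg have corner: "0 \<le> lam * arclen s"
    using mult_nonneg_nonneg by (fastforce simp: arclen_def ac_simps)
  have bump: "\<bar>6 * (lam * stretch s) * d\<bar> \<le> lam * arclen s" if "0 \<le> d" "d \<le> width s / 6" for d
  proof -
    have "\<bar>6 * (lam * stretch s) * d\<bar> = 6 * (lam * stretch s) * d" using lg that(1) by simp
    also have "\<dots> \<le> 6 * (lam * stretch s) * (width s / 6)" using lg that by (intro mult_left_mono)
      auto
    finally show ?thesis by (simp add: arclen_def ac_simps)
  qed
  from assms show ?thesis
  proof (cases rule: less_4_cases)
    case 2
    then have "lin (child s k) x - lin s x = 6 * (lam * stretch s) * (x - (left_end s + width s /
      3))"
      by (simp add: child_simps lin_def algebra_simps)
    moreover have "0 \<le> x - (left_end s + width s / 3)" "x - (left_end s + width s / 3) \<le> width s /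
      6"
      using assms(2) 2 by (auto simp: ivl_def child_simps right_end_def)
    ultimately show ?thesis using bump by simp
  next
    case 3
    then have "lin (child s k) x - lin s x = 6 * (lam * stretch s) * (left_end s + 2 * width s / 3
      - x)"
      by (simp add: child_simps lin_def algebra_simps)
    moreover have "0 \<le> left_end s + 2 * width s / 3 - x" "left_end s + 2 * width s / 3 - x \<le> width
      s / 6"
      using assms(2) 3 by (auto simp: ivl_def child_simps right_end_def)
    ultimately show ?thesis using bump by simp
  qed (use corner in \<open>simp_all add: child_simps lin_def algebra_simps\<close>)
qed

definition left_pt :: "seg \<Rightarrow> real \<times> real" where
  "left_pt s = (left_end s, left_val s)"

definition right_pt :: "seg \<Rightarrow> real \<times> real" where
  "right_pt s = (right_end s, right_val s)"

lemma refine_seg: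
  assumes "0 < width s"
  shows "refine lam [left_pt s, right_pt s] =
    [left_pt (child s 0), left_pt (child s 1), left_pt (child s 2), left_pt (child s 3), right_pt
      s]"
  using assms
  by (simp add: left_pt_def right_pt_def right_end_def right_val_def child_simps stretch_def
    Let_def)

definition seg_nodes :: "nat \<Rightarrow> seg \<Rightarrow> (real \<times> real) list" where
  "seg_nodes n s = (refine lam ^^ n) [left_pt s, right_pt s]"

lemma seg_nodes_ends:
  "seg_nodes n s \<noteq> [] \<and> hd (seg_nodes n s) = left_pt s \<and> last (seg_nodes n s) = right_pt s
    \<and> 2 \<le> length (seg_nodes n s)"
  using funpow_refine_hd_last[where xs="[left_pt s, right_pt s]" and lam=lam and n=n]
    length_funpow_refine_ge[where xs="[left_pt s, right_pt s]" and lam=lam and n=n]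
  by (simp add: seg_nodes_def)

lemma seg_nodes_Suc:
  assumes "0 < width s"
  shows "seg_nodes (Suc n) s = seg_nodes n (child s 0) @ tl (seg_nodes n (child s 1))
    @ tl (seg_nodes n (child s 2)) @ tl (seg_nodes n (child s 3))"
proof -
  define p where "p k = left_pt (child s k)" for k
  have joints: "right_pt (child s 0) = p 1" "right_pt (child s 1) = p 2" "right_pt (child s 2) = p
    3"
    "right_pt (child s 3) = right_pt s"
    using child_adjacent[of s] child_3_right[of s] by (simp_all add: p_def left_pt_def right_pt_def)
  have "seg_nodes (Suc n) s = (refine lam ^^ n) ([p 0] @ p 1 # [p 2, p 3, right_pt s])"
    unfolding seg_nodes_def funpow_Suc_right comp_def using assms by (simp add: refine_seg p_def)
  also have "\<dots> = (refine lam ^^ n) [p 0, p 1] @ tl ((refine lam ^^ n) ([p 1] @ p 2 # [p 3,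
    right_pt s]))"
    by (subst funpow_refine_append_Cons) simp
  also have "\<dots> = (refine lam ^^ n) [p 0, p 1] @ tl ((refine lam ^^ n) [p 1, p 2]
      @ tl ((refine lam ^^ n) ([p 2] @ p 3 # [right_pt s])))"
    by (subst funpow_refine_append_Cons) simp
  also have "\<dots> = (refine lam ^^ n) [p 0, p 1] @ tl ((refine lam ^^ n) [p 1, p 2]
      @ tl ((refine lam ^^ n) [p 2, p 3] @ tl ((refine lam ^^ n) [p 3, right_pt s])))"
    by (subst funpow_refine_append_Cons) simp
  also have "\<dots> = seg_nodes n (child s 0) @ tl (seg_nodes n (child s 1))
    @ tl (seg_nodes n (child s 2)) @ tl (seg_nodes n (child s 3))"
  proof -
    have W: "seg_nodes n (child s 0) = (refine lam ^^ n) [p 0, p 1]"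
      "seg_nodes n (child s 1) = (refine lam ^^ n) [p 1, p 2]"
      "seg_nodes n (child s 2) = (refine lam ^^ n) [p 2, p 3]"
      "seg_nodes n (child s 3) = (refine lam ^^ n) [p 3, right_pt s]"
      using joints by (simp_all add: seg_nodes_def p_def)
    show ?thesis
      using seg_nodes_ends[of n "child s 1"] seg_nodes_ends[of n "child s 2"] unfolding W
      by simp
  qed
  finally show ?thesis .
qed

fun Fn_seg :: "nat \<Rightarrow> seg \<Rightarrow> real \<Rightarrow> real" where
  "Fn_seg 0 s x = lin s x"
| "Fn_seg (Suc n) s x = Fn_seg n (child s (child_index s x)) x"

lemma fst_seg_nodes_mem_ivl:
  assumes "0 < width s" "p \<in> set (seg_nodes n s)"
  shows "fst p \<in> ivl s"
  using assms
proof (induction n arbitrary: s)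
  case 0
  then show ?case by (auto simp: seg_nodes_def left_pt_def right_pt_def ivl_def right_end_def)
next
  case (Suc n)
  define W where "W k = seg_nodes n (child s k)" for k
  have from_child: "fst p \<in> ivl s" if "k < 4" "p \<in> set (W k)" for k
    using Suc.IH[OF width_child_pos[OF that(1) Suc.prems(1)]] that
      ivl_child_subset[OF that(1) less_imp_le[OF Suc.prems(1)]] by (auto simp: W_def)
  have set_tl: "set (tl xs) \<subseteq> set xs" for xs :: "(real \<times> real) list"
    by (cases xs) auto
  have "p \<in> set (W 0) \<or> p \<in> set (W 1) \<or> p \<in> set (W 2) \<or> p \<in> set (W 3)"
    using Suc.prems(2) set_tl[of "W 1"] set_tl[of "W 2"] set_tl[of "W 3"]
    unfolding seg_nodes_Suc[OF Suc.prems(1)] W_def by auto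
  then show ?case using from_child[of 0] from_child[of 1] from_child[of 2] from_child[of 3] by auto
qed

lemma interp_seg_nodes:
  assumes "0 < width s" "x \<in> ivl s"
  shows "interp (seg_nodes n s) x = Fn_seg n s x"
  using assms
proof (induction n arbitrary: s)
  case 0
  then show ?case
    by (simp add: seg_nodes_def left_pt_def right_pt_def ivl_def right_end_def right_val_def
      lin_def)
next
  case (Suc n)
  define W where "W k = seg_nodes n (child s k)" for k
  have ends: "W k \<noteq> [] \<and> hd (W k) = left_pt (child s k) \<and> last (W k) = right_pt (child s k)
      \<and> 2 \<le> length (W k)" for k
    using seg_nodes_ends by (simp add: W_def)
  have below_last: "\<forall>p\<in>set (W k). fst p \<le> fst (last (W k))" if "k < 4" for k
    using fst_seg_nodes_mem_ivl[OF width_child_pos[OF that Suc.prems(1)]] ends[of k]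
    by (auto simp: W_def ivl_def right_pt_def)
  have split: "interp (W j @ tl (W k @ R)) x =
      (if x \<le> right_end (child s j) then interp (W j) x else interp (W k @ R) x)"
    if "j < 4" "right_pt (child s j) = left_pt (child s k)" for j k R
    using interp_append_tl[of "W j" "W k @ R" x] below_last[OF that(1)] ends[of j] ends[of k]
      that(2)
    by (simp add: right_pt_def)
  have "seg_nodes (Suc n) s = W 0 @ tl (W 1 @ tl (W 2 @ tl (W 3)))"
    using seg_nodes_Suc[OF Suc.prems(1), of n] ends[of 1] ends[of 2] by (simp add: W_def)
  then have "interp (seg_nodes (Suc n) s) x = (if x \<le> right_end (child s 0) then interp (W 0) x
      else if x \<le> right_end (child s 1) then interp (W 1) x
      else if x \<le> right_end (child s 2) then interp (W 2) x else interp (W 3) x)"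
    using split[of 0 1] split[of 1 2] split[of 2 3 "[]"] child_adjacent[of s]
    by (simp add: left_pt_def right_pt_def)
  also have "\<dots> = interp (W (child_index s x)) x"
    by (simp add: child_index_def)
  also have "\<dots> = Fn_seg (Suc n) s x"
    using Suc.IH[OF width_child_pos[OF child_index_less_4 Suc.prems(1)]
        mem_ivl_child_index[OF Suc.prems(2)]] by (simp add: W_def)
  finally show ?case .
qed

lemma Fn_eq_Fn_seg: "x \<in> {0..1} \<Longrightarrow> Fn lam n x = Fn_seg n unit_seg x"
  using interp_seg_nodes[of unit_seg x n]
  by (simp add: Fn_def nodes_def seg_nodes_def unit_seg_def left_pt_def right_pt_def ivl_def
      right_end_def right_val_def)

lemma Fn_seg_step:
  assumes "x \<in> ivl s"
  shows "\<bar>Fn_seg (Suc n) s x - Fn_seg n s x\<bar> \<le> lam * arclen s * (1/6 + lam) ^ n"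
  using assms
proof (induction n arbitrary: s)
  case 0
  then show ?case using lin_child_deviation[OF child_index_less_4 mem_ivl_child_index[OF 0]] by simp
next
  case (Suc n)
  let ?c = "child s (child_index s x)"
  have "\<bar>Fn_seg (Suc (Suc n)) s x - Fn_seg (Suc n) s x\<bar> = \<bar>Fn_seg (Suc n) ?c x - Fn_seg n ?c x\<bar>"
    by simp
  also have "\<dots> \<le> lam * arclen ?c * (1/6 + lam) ^ n"
    using Suc.IH[OF mem_ivl_child_index[OF Suc.prems]] .
  also have "\<dots> \<le> lam * ((1/6 + lam) * arclen s) * (1/6 + lam) ^ n"
    using arclen_child_le[OF child_index_less_4 width_nonneg_if_mem_ivl[OF Suc.prems]] lam_gt
    by (intro mult_right_mono mult_left_mono) auto
  finally show ?case by (simp add: algebra_simps)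
qed

definition F_seg :: "seg \<Rightarrow> real \<Rightarrow> real" where
  "F_seg s x = lim (\<lambda>n. Fn_seg n s x)"

definition deviation_const :: real where
  "deviation_const = lam / (5/6 - lam)"

definition osc_const :: real where
  "osc_const = 1 + 2 * deviation_const"

lemma deviation_const_nonneg: "0 \<le> deviation_const"
  using lam_gt lam_lt by (simp add: deviation_const_def)

lemma osc_const_nonneg: "0 \<le> osc_const"
  using deviation_const_nonneg by (simp add: osc_const_def)

lemma Fn_seg_limit: "x \<in> ivl s \<Longrightarrow> (\<lambda>n. Fn_seg n s x) \<longlonglongrightarrow> F_seg s x"
  using geometric_increments(1)[of "\<lambda>n. Fn_seg n s x", OF Fn_seg_step] lam_gt lam_lt
  by (simp add: F_seg_def)

lemma F_seg_deviation: "x \<in> ivl s \<Longrightarrow> \<bar>F_seg s x - lin s x\<bar> \<le> deviation_const * arclen s"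
  using geometric_increments(2)[of "\<lambda>n. Fn_seg n s x", OF Fn_seg_step] lam_gt lam_lt
  by (simp add: F_seg_def deviation_const_def)

lemma Fn_seg_left_end: "0 \<le> width s \<Longrightarrow> Fn_seg n s (left_end s) = left_val s"
proof (induction n arbitrary: s)
  case (Suc n)
  have "child_index s (left_end s) = 0" using Suc.prems by (simp add: child_index_def child_simps
    right_end_def)
  then show ?case
    using Suc.IH[of "child s 0"] width_child[of 0 s] Suc.prems by (simp add: child_0_left)
qed (simp add: lin_def)

lemma Fn_seg_right_end: "0 < width s \<Longrightarrow> Fn_seg n s (right_end s) = right_val s"
proof (induction n arbitrary: s)
  case (Suc n)
  have "child_index s (right_end s) = 3" using Suc.prems by (simp add: child_index_def child_simps
    right_end_def)
  then show ?case
    using Suc.IH[of "child s 3"] width_child_pos[of 3 s] Suc.prems by (simp add: child_3_right)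
qed (simp add: lin_def right_end_def right_val_def)

lemma F_seg_left_end: "0 \<le> width s \<Longrightarrow> F_seg s (left_end s) = left_val s"
  by (simp add: F_seg_def Fn_seg_left_end)

lemma F_seg_right_end: "0 < width s \<Longrightarrow> F_seg s (right_end s) = right_val s"
  by (simp add: F_seg_def Fn_seg_right_end)

lemma F_seg_child_index:
  assumes "x \<in> ivl s"
  shows "F_seg s x = F_seg (child s (child_index s x)) x"
proof -
  have "(\<lambda>n. Fn_seg (Suc n) s x) \<longlonglongrightarrow> F_seg (child s (child_index s x)) x"
    using Fn_seg_limit[OF mem_ivl_child_index[OF assms]] by simp
  then have "(\<lambda>n. Fn_seg n s x) \<longlonglongrightarrow> F_seg (child s (child_index s x)) x"
    by (rule LIMSEQ_imp_Suc)
  with Fn_seg_limit[OF assms] show ?thesis by (rule LIMSEQ_unique)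
qed

lemma F_seg_children_agree:
  assumes "0 < width s" "j < k" "k < 4" "x \<in> ivl (child s j)" "x \<in> ivl (child s k)"
  shows "F_seg (child s j) x = F_seg (child s k) x"
proof -
  have x: "x = right_end (child s j)" "x = left_end (child s k)"
    using children_gap(1)[OF less_imp_le[OF assms(1)] assms(2,3)] assms(4,5)
    by (auto simp: ivl_def)
  have "F_seg (child s j) x = right_val (child s j)"
    using F_seg_right_end[OF width_child_pos[OF _ assms(1)]] x(1) assms(2,3) by simp
  also have "\<dots> = left_val (child s k)"
    using children_meet[OF assms(1-3)] x by simp
  also have "\<dots> = F_seg (child s k) x"
    using F_seg_left_end[OF less_imp_le[OF width_child_pos[OF assms(3,1)]]] x(2) by simp
  finally show ?thesis .
qed

lemma F_seg_child:
  assumes "0 < width s" "k < 4" "x \<in> ivl (child s k)"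
  shows "F_seg s x = F_seg (child s k) x"
proof -
  have x: "x \<in> ivl s" using ivl_child_subset[OF assms(2) less_imp_le[OF assms(1)]] assms(3) by auto
  let ?p = "child_index s x"
  have "F_seg (child s ?p) x = F_seg (child s k) x"
  proof (cases ?p k rule: linorder_cases)
    case less
    then show ?thesis using F_seg_children_agree[OF assms(1) less assms(2)] mem_ivl_child_index[OF
      x] assms(3)
      by simp
  next
    case greater
    then show ?thesis using F_seg_children_agree[OF assms(1) greater child_index_less_4]
      mem_ivl_child_index[OF x] assms(3)
      by simp
  qed simp
  then show ?thesis using F_seg_child_index[OF x] by simp
qed

lemma F_seg_osc:
  assumes "x \<in> ivl s" "y \<in> ivl s"
  shows "\<bar>F_seg s x - F_seg s y\<bar> \<le> osc_const * arclen s"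
proof -
  have "\<bar>lin s x - lin s y\<bar> \<le> stretch s * \<bar>x - y\<bar>" by (rule lin_diff)
  also have "\<dots> \<le> stretch s * width s"
    using assms stretch_ge_1[of s] by (intro mult_left_mono) (auto simp: ivl_def right_end_def)
  finally have "\<bar>lin s x - lin s y\<bar> \<le> arclen s" by (simp add: arclen_def mult.commute)
  then show ?thesis
    using F_seg_deviation[OF assms(1)] F_seg_deviation[OF assms(2)] by (simp add: osc_const_def
      algebra_simps)
qed

inductive descendant :: "seg \<Rightarrow> seg \<Rightarrow> bool" for s where
  descendant_refl: "descendant s s"
| descendant_child: "descendant s t \<Longrightarrow> k < 4 \<Longrightarrow> descendant s (child t k)"

lemma descendant_width_pos: "descendant s t \<Longrightarrow> 0 < width s \<Longrightarrow> 0 < width t"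
  by (induction rule: descendant.induct) (auto intro: width_child_pos)

lemma descendant_ivl_subset: "descendant s t \<Longrightarrow> 0 < width s \<Longrightarrow> ivl t \<subseteq> ivl s"
proof (induction rule: descendant.induct)
  case (descendant_child t k)
  have "0 < width t" using descendant_width_pos[OF descendant_child.hyps(1)
    descendant_child.prems] .
  then show ?case
    using ivl_child_subset[OF descendant_child.hyps(2) less_imp_le] descendant_child by blast
qed simp

lemma F_seg_descendant:
  "descendant s t \<Longrightarrow> 0 < width s \<Longrightarrow> x \<in> ivl t \<Longrightarrow> F_seg s x = F_seg t x"
proof (induction rule: descendant.induct)
  case (descendant_child t k)
  have "0 < width t" using descendant_width_pos[OF descendant_child.hyps(1)
    descendant_child.prems(1)] .
  moreover have "x \<in> ivl t"
    using ivl_child_subset[OF descendant_child.hyps(2) less_imp_le[OF calculation]]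
      descendant_child.prems(2) by blast
  ultimately show ?case using descendant_child F_seg_child by simp
qed simp

lemma descendant_funpow_child: "k < 4 \<Longrightarrow> descendant s (((\<lambda>t. child t k) ^^ j) s)"
  by (induction j) (auto intro: descendant.intros)

lemma funpow_child_0:
  "((\<lambda>t. child t 0) ^^ j) s = Seg (left_end s) (left_val s) (width s / 3 ^ j) (slope s)"
  by (induction j) (simp_all add: child_simps)

lemma funpow_child_3:
  "right_end (((\<lambda>t. child t 3) ^^ j) s) = right_end s \<and> right_val (((\<lambda>t. child t 3) ^^ j) s) =
    right_val s
    \<and> width (((\<lambda>t. child t 3) ^^ j) s) = width s / 3 ^ j \<and> slope (((\<lambda>t. child t 3) ^^ j) s) =
      slope s"
  by (induction j) (simp_all add: child_3_right, simp add: child_simps)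

lemma F_eq_F_seg: "x \<in> {0..1} \<Longrightarrow> F lam x = F_seg unit_seg x"
  by (simp add: F_def F_seg_def Fn_eq_Fn_seg)

section \<open>Lipschitz estimates\<close>

lemma F_seg_lipschitz_left_end:
  assumes "0 < width s" "x \<in> ivl s"
  shows "\<bar>F_seg s x - left_val s\<bar> \<le> 3 * osc_const * stretch s * (x - left_end s)"
proof (cases "x = left_end s")
  case True
  then show ?thesis using F_seg_left_end assms(1) by simp
next
  case False
  then have d: "0 < x - left_end s" "x - left_end s \<le> width s"
    using assms(2) by (auto simp: ivl_def right_end_def)
  obtain j where j: "width s / 3 ^ Suc j < x - left_end s" "x - left_end s \<le> width s / 3 ^ j"
    by (rule exists_power_scale[OF d]) auto
  define t where "t = ((\<lambda>t. child t 0) ^^ j) s"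
  have t: "left_end t = left_end s" "left_val t = left_val s" "width t = width s / 3 ^ j"
    "stretch t = stretch s"
    by (simp_all add: t_def funpow_child_0 stretch_def)
  have mem: "x \<in> ivl t" "left_end s \<in> ivl t"
    using j assms t by (auto simp: ivl_def right_end_def)
  have desc: "descendant s t" unfolding t_def by (rule descendant_funpow_child) simp
  have "\<bar>F_seg s x - left_val s\<bar> = \<bar>F_seg t x - F_seg t (left_end s)\<bar>"
    using F_seg_descendant[OF desc assms(1)] mem F_seg_left_end[of t] t assms(1) by simp
  also have "\<dots> \<le> osc_const * arclen t" by (rule F_seg_osc[OF mem])
  also have "\<dots> = 3 * osc_const * stretch s * (width s / 3 ^ Suc j)"
    by (simp add: arclen_def t field_simps)
  also have "\<dots> \<le> 3 * osc_const * stretch s * (x - left_end s)"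
    using j osc_const_nonneg stretch_ge_1[of s] by (intro mult_left_mono) auto
  finally show ?thesis .
qed

lemma F_seg_lipschitz_right_end:
  assumes "0 < width s" "x \<in> ivl s"
  shows "\<bar>F_seg s x - right_val s\<bar> \<le> 3 * osc_const * stretch s * (right_end s - x)"
proof (cases "x = right_end s")
  case True
  then show ?thesis using F_seg_right_end assms(1) by simp
next
  case False
  then have d: "0 < right_end s - x" "right_end s - x \<le> width s"
    using assms(2) by (auto simp: ivl_def right_end_def)
  obtain j where j: "width s / 3 ^ Suc j < right_end s - x" "right_end s - x \<le> width s / 3 ^ j"
    by (rule exists_power_scale[OF d]) auto
  define t where "t = ((\<lambda>t. child t 3) ^^ j) s"
  have t: "right_end t = right_end s" "right_val t = right_val s" "width t = width s / 3 ^ j"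
    "stretch t = stretch s"
    using funpow_child_3[of j s] by (simp_all add: t_def stretch_def)
  have mem: "x \<in> ivl t" "right_end s \<in> ivl t"
    using j assms t by (auto simp: ivl_def right_end_def)
  have desc: "descendant s t" unfolding t_def by (rule descendant_funpow_child) simp
  have "\<bar>F_seg s x - right_val s\<bar> = \<bar>F_seg t x - F_seg t (right_end s)\<bar>"
    using F_seg_descendant[OF desc assms(1)] mem F_seg_right_end[of t] t assms(1) by simp
  also have "\<dots> \<le> osc_const * arclen t" by (rule F_seg_osc[OF mem])
  also have "\<dots> = 3 * osc_const * stretch s * (width s / 3 ^ Suc j)"
    by (simp add: arclen_def t field_simps)
  also have "\<dots> \<le> 3 * osc_const * stretch s * (right_end s - x)"
    using j osc_const_nonneg stretch_ge_1[of s] by (intro mult_left_mono) auto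
  finally show ?thesis .
qed

lemma F_seg_lipschitz_to_child_right_end:
  assumes "0 < width s" "k < 4" "x \<in> ivl (child s k)"
  shows "\<bar>F_seg s x - F_seg s (right_end (child s k))\<bar>
    \<le> 18 * osc_const * stretch s * (right_end (child s k) - x)"
proof -
  let ?c = "child s k"
  have pos: "0 < width ?c" using width_child_pos[OF assms(2,1)] .
  have "right_end ?c \<in> ivl ?c" "x \<le> right_end ?c" using pos assms(3) by (auto simp: ivl_def
    right_end_def)
  then have "\<bar>F_seg s x - F_seg s (right_end ?c)\<bar> = \<bar>F_seg ?c x - right_val ?c\<bar>"
    using F_seg_child[OF assms(1,2)] assms(3) F_seg_right_end[OF pos] by simp
  also have "\<dots> \<le> 3 * osc_const * stretch ?c * (right_end ?c - x)"
    by (rule F_seg_lipschitz_right_end[OF pos assms(3)])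
  also have "\<dots> \<le> 3 * osc_const * (6 * stretch s) * (right_end ?c - x)"
    using stretch_child_le_6[OF assms(2), of s] osc_const_nonneg \<open>x \<le> right_end ?c\<close>
    by (intro mult_right_mono mult_left_mono) auto
  finally show ?thesis by (simp add: algebra_simps)
qed

lemma F_seg_lipschitz_to_child_left_end:
  assumes "0 < width s" "k < 4" "x \<in> ivl (child s k)"
  shows "\<bar>F_seg s x - F_seg s (left_end (child s k))\<bar>
    \<le> 18 * osc_const * stretch s * (x - left_end (child s k))"
proof -
  let ?c = "child s k"
  have pos: "0 < width ?c" using width_child_pos[OF assms(2,1)] .
  have "left_end ?c \<in> ivl ?c" "left_end ?c \<le> x" using pos assms(3) by (auto simp: ivl_def
    right_end_def)
  then have "\<bar>F_seg s x - F_seg s (left_end ?c)\<bar> = \<bar>F_seg ?c x - left_val ?c\<bar>"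
    using F_seg_child[OF assms(1,2)] assms(3) F_seg_left_end[OF less_imp_le[OF pos]] by simp
  also have "\<dots> \<le> 3 * osc_const * stretch ?c * (x - left_end ?c)"
    by (rule F_seg_lipschitz_left_end[OF pos assms(3)])
  also have "\<dots> \<le> 3 * osc_const * (6 * stretch s) * (x - left_end ?c)"
    using stretch_child_le_6[OF assms(2), of s] osc_const_nonneg \<open>left_end ?c \<le> x\<close>
    by (intro mult_right_mono mult_left_mono) auto
  finally show ?thesis by (simp add: algebra_simps)
qed

lemma F_seg_lipschitz_between_children:
  assumes "0 < width s" "j < k" "k < 4"
  shows "\<bar>F_seg s (right_end (child s j)) - F_seg s (left_end (child s k))\<bar>
    \<le> 6 * osc_const * stretch s * (left_end (child s k) - right_end (child s j))"
proof (cases "right_end (child s j) = left_end (child s k)")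
  case False
  let ?e1 = "right_end (child s j)" and ?e2 = "left_end (child s k)"
  have gap: "width s / 6 \<le> ?e2 - ?e1" using children_gap(2)[OF less_imp_le[OF assms(1)]
    assms(2,3)] False
    by simp
  have "?e1 \<in> ivl (child s j)" "?e2 \<in> ivl (child s k)"
    using width_child_pos[OF _ assms(1), of j] width_child_pos[OF assms(3,1)] assms(2,3)
    by (auto simp: ivl_def right_end_def)
  then have mem: "?e1 \<in> ivl s" "?e2 \<in> ivl s"
    using ivl_child_subset[OF _ less_imp_le[OF assms(1)], of j] ivl_child_subset[OF assms(3)
      less_imp_le[OF assms(1)]]
      assms(2,3) by auto
  then have "\<bar>F_seg s ?e1 - F_seg s ?e2\<bar> \<le> osc_const * stretch s * width s"
    using F_seg_osc[OF mem] by (simp add: arclen_def ac_simps)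
  also have "\<dots> \<le> osc_const * stretch s * (6 * (?e2 - ?e1))"
    using gap osc_const_nonneg stretch_ge_1[of s] by (intro mult_left_mono) auto
  finally show ?thesis by (simp add: algebra_simps)
qed simp

lemma F_seg_lipschitz_across_children:
  assumes "0 < width s" "j < 4" "k < 4" "j \<noteq> k" "x \<in> ivl (child s j)" "y \<in> ivl (child s k)"
  shows "\<bar>F_seg s x - F_seg s y\<bar> \<le> 18 * osc_const * stretch s * \<bar>x - y\<bar>"
proof -
  let ?L = "18 * osc_const * stretch s"
  have ordered: "\<bar>F_seg s x - F_seg s y\<bar> \<le> ?L * \<bar>x - y\<bar>"
    if "j < k" "k < 4" "x \<in> ivl (child s j)" "y \<in> ivl (child s k)" for j k x y
  proof -
    let ?e1 = "right_end (child s j)" and ?e2 = "left_end (child s k)"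
    have order: "x \<le> ?e1" "?e1 \<le> ?e2" "?e2 \<le> y"
      using that children_gap(1)[OF less_imp_le[OF assms(1)] that(1,2)] by (auto simp: ivl_def)
    have "\<bar>F_seg s ?e1 - F_seg s ?e2\<bar> \<le> 6 * osc_const * stretch s * (?e2 - ?e1)"
      by (rule F_seg_lipschitz_between_children[OF assms(1) that(1,2)])
    also have "\<dots> \<le> ?L * (?e2 - ?e1)"
      using order osc_const_nonneg stretch_ge_1[of s] by (intro mult_right_mono) auto
    finally have "\<bar>F_seg s ?e1 - F_seg s ?e2\<bar> \<le> ?L * (?e2 - ?e1)" .
    moreover have "\<bar>F_seg s x - F_seg s ?e1\<bar> \<le> ?L * (?e1 - x)"
      using F_seg_lipschitz_to_child_right_end[OF assms(1) _ that(3)] that(1,2) by simp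
    moreover have "\<bar>F_seg s y - F_seg s ?e2\<bar> \<le> ?L * (y - ?e2)"
      using F_seg_lipschitz_to_child_left_end[OF assms(1) that(2,4)] .
    moreover have "?L * (?e1 - x) + ?L * (?e2 - ?e1) + ?L * (y - ?e2) = ?L * \<bar>x - y\<bar>"
      using order by (simp add: algebra_simps)
    ultimately show ?thesis by linarith
  qed
  from assms(4) consider "j < k" | "k < j" by linarith
  then show ?thesis
  proof cases
    case 1
    then show ?thesis using ordered assms(3,5,6) by blast
  next
    case 2
    then show ?thesis using ordered[OF 2 assms(2,6,5)] by (simp add: abs_minus_commute)
  qed
qed

lemma descendant_nested:
  assumes "\<And>n. c n < 4" "\<And>n. S (Suc n) = child (S n) (c n)"
  shows "descendant (S 0) (S n)"
  by (induction n) (auto intro: descendant.intros simp: assms)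

lemma width_nested_le:
  assumes "\<And>n. c n < 4" "\<And>n. S (Suc n) = child (S n) (c n)" "0 < width (S 0)"
  shows "width (S n) \<le> width (S 0) / 3 ^ n"
proof (induction n)
  case (Suc n)
  have "width (S (Suc n)) \<le> width (S n) / 3"
    using width_child[OF assms(1)] descendant_width_pos[OF descendant_nested[of c S, OF
      assms(1,2)] assms(3)]
      assms(2) by (simp add: less_imp_le)
  also have "\<dots> \<le> width (S 0) / 3 ^ n / 3"
    using Suc.IH by (rule divide_right_mono) simp
  finally show ?case by (simp add: mult.commute)
qed simp

lemma F_seg_lipschitz_at_nested_point:
  assumes pos: "0 < width (S 0)"
    and nested: "\<And>n. c n < 4" "\<And>n. S (Suc n) = child (S n) (c n)"
    and mem: "\<And>n. x0 \<in> ivl (S n)"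
    and bounded: "\<And>n. stretch (S n) \<le> R"
    and x: "x \<in> ivl (S 0)"
  shows "\<bar>F_seg (S 0) x - F_seg (S 0) x0\<bar> \<le> 18 * osc_const * R * \<bar>x - x0\<bar>"
proof (cases "x = x0")
  case False
  have desc: "descendant (S 0) (S n)" for n using descendant_nested[of c S, OF nested] .
  note width = width_nested_le[of c S, OF nested pos]
  obtain n where "width (S 0) / \<bar>x - x0\<bar> < 3 ^ n" using real_arch_pow[of 3] by auto
  then have "width (S 0) / 3 ^ n < \<bar>x - x0\<bar>" using False by (simp add: field_simps)
  then have "width (S n) < \<bar>x - x0\<bar>" using width[of n] by linarith
  then have "x \<notin> ivl (S n)" using mem[of n] by (auto simp: ivl_def right_end_def)
  then obtain m where m: "x \<in> ivl (S m)" "x \<notin> ivl (S (Suc m))"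
    using ex_least_nat_less[of "\<lambda>n. x \<notin> ivl (S n)" n] x by auto
  have pos_m: "0 < width (S m)" by (rule descendant_width_pos[OF desc pos])
  have "child_index (S m) x \<noteq> c m" using m mem_ivl_child_index[OF m(1)] nested(2) by auto
  then have "\<bar>F_seg (S m) x - F_seg (S m) x0\<bar> \<le> 18 * osc_const * stretch (S m) * \<bar>x - x0\<bar>"
    using F_seg_lipschitz_across_children[OF pos_m child_index_less_4 nested(1) _
      mem_ivl_child_index[OF m(1)]]
      mem[of "Suc m"] nested(2) by simp
  also have "\<dots> \<le> 18 * osc_const * R * \<bar>x - x0\<bar>"
    using bounded[of m] osc_const_nonneg by (intro mult_right_mono mult_left_mono) auto
  finally show ?thesis using F_seg_descendant[OF desc pos] m(1) mem[of m] by simp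
qed simp

lemma F_seg_midpoint_bump:
  assumes "0 < width s"
  shows "F_seg s (left_end s + width s / 2) - (left_val s + right_val s) / 2 = lam * arclen s"
proof -
  have "left_end (child s 2) \<in> ivl (child s 2)"
    using width_child_pos[of 2 s] assms by (simp add: ivl_def right_end_def)
  then have "F_seg s (left_end (child s 2)) = left_val (child s 2)"
    using F_seg_child[OF assms, of 2] F_seg_left_end[of "child s 2"] width_child_pos[of 2 s] assms
    by simp
  then show ?thesis by (simp add: child_simps right_val_def arclen_def algebra_simps)
qed

section \<open>The pieces containing a point\<close>

fun cell :: "real \<Rightarrow> nat \<Rightarrow> seg" where
  "cell x 0 = unit_seg"
| "cell x (Suc n) = child (cell x n) (digit x n)"

lemma descendant_cell: "descendant unit_seg (cell x n)"
  using descendant_nested[of "digit x" "cell x"] digit_less_4 by simp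

lemma width_cell_pos: "0 < width (cell x n)"
  using descendant_width_pos[OF descendant_cell] by (simp add: width_unit_seg)

lemma ivl_cell_subset: "ivl (cell x n) \<subseteq> {0..1}"
  using descendant_ivl_subset[OF descendant_cell] ivl_unit_seg by (simp add: width_unit_seg)

lemma width_cell_le: "width (cell x n) \<le> (1/3) ^ n"
  using width_nested_le[of "digit x" "cell x"] digit_less_4 by (simp add: width_unit_seg
    power_one_over)

text \<open>\<open>(T ^^ n) x\<close> is the relative position of \<open>x\<close> in its \<open>n\<close>-th cell, measured from the
  left end if \<open>orient x n\<close> and from the right end otherwise; \<open>T\<close> reverses the orientation
  exactly on \<open>[1/2, 2/3)\<close>.\<close>

lemma cell_coordinate:
  assumes "x \<in> {0..1}"
  shows "(T ^^ n) x \<in> {0..1} \<and> x = (if orient x n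
    then left_end (cell x n) + width (cell x n) * (T ^^ n) x
    else right_end (cell x n) - width (cell x n) * (T ^^ n) x)"
proof (induction n)
  case 0
  then show ?case using assms by (simp add: unit_seg_def right_end_def)
next
  case (Suc n)
  define y where "y = (T ^^ n) x"
  have y: "y \<in> {0..1}" using conjunct1[OF Suc.IH] by (simp only: y_def)
  have x: "x = (if orient x n then left_end (cell x n) + width (cell x n) * y
      else right_end (cell x n) - width (cell x n) * y)"
    using conjunct2[OF Suc.IH] by (simp only: y_def)
  have step: "(T ^^ Suc n) x = T y" "u n x = U y" by (simp_all add: y_def u_def)
  have "T y \<in> {0..1}" using T_mem_unit[OF y] .
  moreover consider "y < 1/3" | "1/3 \<le> y" "y < 1/2" | "1/2 \<le> y" "y < 2/3" | "2/3 \<le> y"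
    by linarith
  then have "x = (if orient x (Suc n) then left_end (cell x (Suc n)) + width (cell x (Suc n)) * T y
      else right_end (cell x (Suc n)) - width (cell x (Suc n)) * T y)"
  proof cases
    case 1
    then have U: "U y = 0" and T: "T y = 3 * y" by (simp_all add: U_def T_def)
    show ?thesis using x unfolding T
      by (cases "orient x n") (simp_all add: U step digit_def child_simps right_end_def field_simps)
  next
    case 2
    then have U: "U y = 1" and T: "T y = 6 * y - 2" by (simp_all add: U_def T_def)
    show ?thesis using x unfolding T
      by (cases "orient x n") (simp_all add: U step digit_def child_simps right_end_def field_simps)
  next
    case 3
    then have U: "U y = 2" and T: "T y = 4 - 6 * y" by (simp_all add: U_def T_def)
    show ?thesis using x unfolding T
      by (cases "orient x n") (simp_all add: U step digit_def child_simps right_end_def field_simps)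
  next
    case 4
    then have U: "U y = 3" and T: "T y = 3 * y - 2" by (simp_all add: U_def T_def)
    show ?thesis using x unfolding T
      by (cases "orient x n") (simp_all add: U step digit_def child_simps right_end_def field_simps)
  qed
  ultimately show ?case unfolding step(1) by blast
qed

lemma mem_ivl_cell:
  assumes "x \<in> {0..1}"
  shows "x \<in> ivl (cell x n)"
proof -
  have "0 \<le> width (cell x n) * (T ^^ n) x" "width (cell x n) * (T ^^ n) x \<le> width (cell x n)"
    using cell_coordinate[OF assms, of n] width_cell_pos[of x n] by (auto intro: mult_left_le)
  then show ?thesis
    using cell_coordinate[OF assms, of n] by (cases "orient x n") (auto simp: ivl_def right_end_def)
qed

lemma stretch_cell_bounded:
  assumes "x \<in> E_tilde"
  shows "\<exists>R. \<forall>n. stretch (cell x n) \<le> R"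
proof -
  obtain N where N: "\<forall>n\<ge>N. u n x \<notin> {1, 2}"
    using E_tilde_eventually_outer[OF assms] ..
  have "slope (cell x n) = slope (cell x (min n N))" for n
  proof (induction n)
    case (Suc n)
    show ?case
    proof (cases "N \<le> n")
      case True
      then have "digit x n = 0 \<or> digit x n = 3"
        using N True digit_less_4[of x n] by (auto simp: digit_def)
      then show ?thesis using Suc.IH True by (auto simp: child_simps)
    qed (simp add: not_le Suc_leI min_absorb1)
  qed simp
  then have "stretch (cell x n) = stretch (cell x (min n N))" for n
    by (simp add: stretch_def)
  also have "\<dots> n \<le> Max ((\<lambda>k. stretch (cell x k)) ` {..N})" for n
    by (rule Max_ge) auto
  finally show ?thesis by blast
qed

lemma F_lipschitz_at_E_tilde:
  assumes "x0 \<in> {0..1}" "x0 \<in> E_tilde"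
  shows "\<exists>C. \<forall>x\<in>{0..1}. \<bar>F lam x - F lam x0\<bar> \<le> C * \<bar>x - x0\<bar>"
proof -
  obtain R where R: "\<forall>n. stretch (cell x0 n) \<le> R" using stretch_cell_bounded[OF assms(2)] ..
  show ?thesis
  proof (intro exI ballI)
    fix x :: real assume "x \<in> {0..1}"
    then have "\<bar>F_seg unit_seg x - F_seg unit_seg x0\<bar> \<le> 18 * osc_const * R * \<bar>x - x0\<bar>"
      using F_seg_lipschitz_at_nested_point[of "cell x0" "digit x0", OF _ digit_less_4 _
          mem_ivl_cell[OF assms(1)] spec[OF R]]
      by (simp add: width_unit_seg ivl_unit_seg)
    then show "\<bar>F lam x - F lam x0\<bar> \<le> 18 * osc_const * R * \<bar>x - x0\<bar>"
      using F_eq_F_seg \<open>x \<in> {0..1}\<close> assms(1) by simp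
  qed
qed

lemma F_second_difference_cell:
  assumes "x0 \<in> {0..1}"
  shows "lam * width (cell x0 n) \<le> F lam ((left_end (cell x0 n) + right_end (cell x0 n)) / 2)
    - (F lam (left_end (cell x0 n)) + F lam (right_end (cell x0 n))) / 2"
proof -
  let ?s = "cell x0 n"
  have mem: "left_end ?s \<in> ivl ?s" "right_end ?s \<in> ivl ?s" "left_end ?s + width ?s / 2 \<in> ivl ?s"
    using width_cell_pos[of x0 n] by (auto simp: ivl_def right_end_def)
  have F: "F lam z = F_seg ?s z" if "z \<in> ivl ?s" for z
    using F_eq_F_seg[of z] ivl_cell_subset[of x0 n] that
      F_seg_descendant[OF descendant_cell, of z x0 n] by (auto simp: width_unit_seg)
  have "width ?s * 1 \<le> width ?s * stretch ?s"
    using width_cell_pos[of x0 n] stretch_ge_1[of ?s] by (intro mult_left_mono) auto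
  then have "lam * width ?s \<le> lam * arclen ?s"
    using lam_gt by (simp add: arclen_def)
  also have "\<dots> = F_seg ?s (left_end ?s + width ?s / 2) - (left_val ?s + right_val ?s) / 2"
    using F_seg_midpoint_bump[OF width_cell_pos] by simp
  finally show ?thesis
    using F mem F_seg_left_end[of ?s] F_seg_right_end[OF width_cell_pos] width_cell_pos[of x0 n]
    by (simp add: right_end_def add_divide_distrib)
qed

lemma not_pointwise_holder_F:
  assumes "x0 \<in> {0..1}" "1 < \<alpha>"
  shows "\<not> pointwise_holder (F lam) \<alpha> x0"
proof
  assume holder: "pointwise_holder (F lam) \<alpha> x0"
  have "0 \<le> \<alpha>" "0 < lam" using assms(2) lam_gt by simp_all
  then obtain \<delta> K where \<delta>: "0 < \<delta>" and second_diff: "\<forall>a\<in>{0..1}. \<forall>b\<in>{0..1}.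
      a \<le> x0 \<longrightarrow> x0 \<le> b \<longrightarrow> b - a < \<delta> \<longrightarrow>
      \<bar>F lam ((a + b) / 2) - (F lam a + F lam b) / 2\<bar> \<le> K * ((b - a) powr \<alpha> + (b - a)\<^sup>2)"
    using pointwise_holder_second_difference[OF holder] by blast
  obtain \<eta> where \<eta>: "0 < \<eta>" "\<forall>h. 0 < h \<longrightarrow> h < \<eta> \<longrightarrow> K * (h powr \<alpha> + h\<^sup>2) < lam * h"
    using superlinear_lt_linear_near_0[OF assms(2) \<open>0 < lam\<close>] by blast
  obtain n where n: "(1/3 :: real) ^ n < min \<delta> \<eta>"
    using real_arch_pow_inv[of "min \<delta> \<eta>" "1/3"] \<delta> \<eta> by auto
  let ?s = "cell x0 n"
  have h: "0 < width ?s" "width ?s < \<delta>" "width ?s < \<eta>"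
    using width_cell_pos[of x0 n] width_cell_le[of x0 n] n by auto
  have ends: "left_end ?s \<in> {0..1}" "right_end ?s \<in> {0..1}" "left_end ?s \<le> x0" "x0 \<le> right_end ?s"
    using ivl_cell_subset[of x0 n] mem_ivl_cell[OF assms(1), of n] h(1)
    by (auto simp: ivl_def right_end_def)
  have "right_end ?s - left_end ?s = width ?s" by (simp add: right_end_def)
  then have "lam * width ?s \<le> K * (width ?s powr \<alpha> + (width ?s)\<^sup>2)"
    using F_second_difference_cell[OF assms(1), of n] second_diff[rule_format, OF ends] h(2)
    by simp
  with \<eta>(2) h(1,3) show False by (meson not_less)
qed

theorem holder_exponent_F_le_1: "x0 \<in> {0..1} \<Longrightarrow> holder_exponent (F lam) x0 \<le> 1"
  using holder_exponent_le[of 1 "F lam" x0] not_pointwise_holder_F by (simp add: one_ereal_def)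

theorem holder_exponent_F_E_tilde:
  assumes "x0 \<in> {0..1}" "x0 \<in> E_tilde"
  shows "holder_exponent (F lam) x0 = 1"
proof -
  obtain C where "\<forall>x\<in>{0..1}. \<bar>F lam x - F lam x0\<bar> \<le> C * \<bar>x - x0\<bar>"
    using F_lipschitz_at_E_tilde[OF assms] ..
  then have "pointwise_holder (F lam) 1 x0" by (rule pointwise_holder_1_if_lipschitz_at)
  then have "1 \<le> holder_exponent (F lam) x0"
    using holder_exponent_ge[of 1] by (simp add: one_ereal_def)
  then show ?thesis using holder_exponent_F_le_1[OF assms(1)] by simp
qed

end

theorem proposition3p11:
  fixes lam :: real and x0 :: real
  assumes "1/6 < lam" and "lam < 5/6"
    and "x0 \<in> {0..1}"
  shows "holder_exponent (F lam) x0 \<le> 1 \<and>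
         (x0 \<in> E_tilde \<longrightarrow> holder_exponent (F lam) x0 = 1)"
proof -
  interpret admissible_lam lam using assms(1,2) by unfold_locales
  show ?thesis using holder_exponent_F_le_1 holder_exponent_F_E_tilde assms(3) by blast
qed

end
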